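(* Let $w$ be an integer with $w-1\equiv 1$ or $3\pmod 6$, and for $i\ge0$ let $\dot{\mathcal{D}}_i$ denote the set of $i$-dimensional subspaces of $\mathrm{GF}(2)^{w-1}$ each of which is orthogonal (over $\mathrm{GF}(2)$) to the characteristic vectors of all blocks of at least one STS$(w-1)$ on $\{1,\ldots,w-1\}$. Let $i,j$ be nonnegative integers with $i\le j$. If $\dot{\mathcal{D}}_j$ is nonempty, then every subspace from $\dot{\mathcal{D}}_i$ is contained in exactly $\dot\Gamma_{w,i,j}$ subspaces from $\dot{\mathcal{D}}_j$, where $$\dot\Gamma_{w,i,j}=\left(\left(\tfrac{w}{2^i}\right)!\right)^{2^i}\Bigg/\left(2^{\frac{(j-i)(j+i+1)}2}\left(\left(\tfrac{w}{2^j}\right)!\right)^{2^j}[j-i]_2!\right).$$ In particular, $|\dot{\mathcal{D}}_j|=\dot\Gamma_{w,0,j}$.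
   Context: A Steiner triple system STS$(n)$ on $\{1,\ldots,n\}$ is a collection of 3-subsets (blocks) such that every 2-subset is contained in exactly one block. Blocks are identified with their characteristic vectors in $\mathrm{GF}(2)^{n}$; $x\perp y$ means $\sum_t x_ty_t=0$. The $q$-factorial is $[n]_q!=\prod_{s=1}^n\sum_{r=0}^{s-1}q^r$, with $[0]_q!=1$. *)

theory Defs
  imports "HOL-Analysis.Analysis" "HOL-Library.Z2"
begin

text \<open>The ground set {1,...,w-1} is modelled by a finite type 'n with CARD('n) = w - 1;
GF(2)^(w-1) is the vector type bit^'n, a vector space over the field bit = GF(2).\<close>

definition is_STS :: "'n set set \<Rightarrow> bool" where
  "is_STS S \<longleftrightarrow> (\<forall>B\<in>S. card B = 3) \<and>
     (\<forall>x y. x \<noteq> y \<longrightarrow> (\<exists>!B. B \<in> S \<and> {x, y} \<subseteq> B))"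

definition charvec :: "'n::finite set \<Rightarrow> bit ^ 'n" where
  "charvec B = (\<chi> t. if t \<in> B then 1 else 0)"

definition orth :: "bit ^ 'n::finite \<Rightarrow> bit ^ 'n \<Rightarrow> bool" where
  "orth x y \<longleftrightarrow> (\<Sum>t\<in>UNIV. x $ t * y $ t) = 0"

definition Ddot :: "nat \<Rightarrow> (bit ^ 'n::finite) set set" where
  "Ddot i = {V. vec.subspace V \<and> vec.dim V = i \<and>
     (\<exists>S::'n set set. is_STS S \<and> (\<forall>v\<in>V. \<forall>B\<in>S. orth v (charvec B)))}"

definition qfact :: "real \<Rightarrow> nat \<Rightarrow> real" where
  "qfact q n = (\<Prod>s=1..n. \<Sum>r<s. q ^ r)"

definition Gamma_dot :: "nat \<Rightarrow> nat \<Rightarrow> nat \<Rightarrow> real" where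
  "Gamma_dot w i j =
     (real (fact (w div 2 ^ i)) ^ (2 ^ i)) /
     (2 powr (real ((j - i) * (j + i + 1)) / 2) * real (fact (w div 2 ^ j)) ^ (2 ^ j)
        * qfact 2 (j - i))"

end

theory Submission
  imports Defs
begin

text \<open>Adjoin to the \<open>w - 1\<close> coordinates an extra point at which every vector vanishes. If a
  nonzero \<open>x\<close> is orthogonal to all blocks of an STS, the blocks through a point of its support pair
  off the rest of the support with the complement, so \<open>x\<close> has weight \<open>w/2\<close>: the subspaces in
  \<open>Ddot j\<close> are balanced. By Fourier inversion, a basis of a \<open>j\<close>-dimensional subspace spans a
  balanced subspace iff it is equidistributed, i.e. the values of the basis vectors at the \<open>w\<close>
  points take every value in \<open>GF(2)^j\<close> exactly \<open>w/2^j\<close> times. Two equidistributed bases differ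
  by a permutation of the coordinates, which carries an STS to an STS, so a nonempty \<open>Ddot j\<close>
  contains every balanced \<open>j\<close>-dimensional subspace. Finally, a vector extends an equidistributed
  tuple iff its support halves every fibre; counting such extensions of a basis of \<open>U\<close> and
  dividing by the number of bases of a fixed \<open>V \<supseteq> U\<close> extending it gives \<open>\<Gamma>\<close>.\<close>

declare add_bit_eq_xor [simp del] mult_bit_eq_and [simp del]

lemma UNIV_bit: "(UNIV :: bit set) = {0, 1}"
  by (auto intro: bit.exhaust)

instance bit :: finite
  by standard (simp add: UNIV_bit)

lemma card_UNIV_bit: "CARD(bit) = 2"
  by (simp add: UNIV_bit)

lemma bit_add_self [simp]: "(x::bit) + x = 0"
  by (cases x) simp_all

lemma bit_add_eq_0_iff: "(x::bit) + y = 0 \<longleftrightarrow> x = y"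
  by (cases x; cases y) simp_all

lemma bit_of_nat: "(of_nat n :: bit) = (if even n then 0 else 1)"
  by (induction n) auto

lemma bitvec_add_self [simp]: "(x::bit^'n) + x = 0"
  by (simp add: vec_eq_iff)

lemma bitvec_add_eq_0_iff: "(x::bit^'n) + y = 0 \<longleftrightarrow> x = y"
  by (simp add: vec_eq_iff bit_add_eq_0_iff)

section \<open>Linear algebra over GF(2) with lists of vectors\<close>

definition lincomb :: "bit list \<Rightarrow> (bit^'n) list \<Rightarrow> bit^'n" where
  "lincomb c l = (\<Sum>k<length l. (c!k) *s (l!k))"

definition bitlists :: "nat \<Rightarrow> bit list set" where
  "bitlists s = {c. length c = s}"

definition list_span :: "(bit^'n) list \<Rightarrow> (bit^'n) set" where
  "list_span l = (\<lambda>c. lincomb c l) ` bitlists (length l)"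

definition list_independent :: "(bit^'n) list \<Rightarrow> bool" where
  "list_independent l \<longleftrightarrow>
     (\<forall>c. length c = length l \<longrightarrow> lincomb c l = 0 \<longrightarrow> c = replicate (length l) 0)"

lemma card_bitlists: "card (bitlists s) = 2 ^ s"
proof -
  have "card {c. set c \<subseteq> (UNIV :: bit set) \<and> length c = s} = card (UNIV :: bit set) ^ s"
    by (rule card_lists_length_eq) simp
  then show ?thesis by (simp add: bitlists_def card_UNIV_bit)
qed

lemma finite_bitlists [simp]: "finite (bitlists s)"
  using finite_lists_length_eq[of "UNIV :: bit set" s] by (simp add: bitlists_def)

lemma bitlists_Suc: "a' \<in> bitlists (Suc s) \<longleftrightarrow> (\<exists>a x. a' = a @ [x] \<and> a \<in> bitlists s)"
  by (cases a' rule: rev_cases) (auto simp: bitlists_def)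

lemma lincomb_snoc:
  "length c = length l \<Longrightarrow> lincomb (c @ [x]) (l @ [b]) = lincomb c l + x *s b"
  by (simp add: lincomb_def nth_append)

lemma lincomb_replicate_0 [simp]: "lincomb (replicate (length l) 0) l = 0"
  by (simp add: lincomb_def)

lemma lincomb_add:
  "length c = length l \<Longrightarrow> length d = length l \<Longrightarrow>
     lincomb c l + lincomb d l = lincomb (map2 (+) c d) l"
  by (simp add: lincomb_def sum.distrib[symmetric] vector_sadd_rdistrib)

lemma lincomb_scale: "length c = length l \<Longrightarrow> r *s lincomb c l = lincomb (map ((*) r) c) l"
  by (simp add: lincomb_def vec.scale_sum_right)

lemma lincomb_component:
  "length c = length l \<Longrightarrow> lincomb c l $ t = (\<Sum>k<length l. c!k * (l!k) $ t)"
  by (simp add: lincomb_def)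

lemma lincomb_unit: "k < length l \<Longrightarrow> lincomb ((replicate (length l) 0)[k := 1]) l = l!k"
  unfolding lincomb_def by (simp add: nth_list_update if_distrib[of "\<lambda>c. c *s _"] cong: if_cong)

lemma list_span_eq: "list_span l = {lincomb c l | c. length c = length l}"
  by (auto simp: list_span_def bitlists_def)

lemma subspace_list_span: "vec.subspace (list_span l)"
  unfolding vec.subspace_def list_span_eq
proof (intro conjI ballI allI)
  show "0 \<in> {lincomb c l | c. length c = length l}"
    by (metis (mono_tags) lincomb_replicate_0 length_replicate mem_Collect_eq)
  fix x y assume "x \<in> {lincomb c l | c. length c = length l}" "y \<in> {lincomb c l | c. length c = length l}"
  then show "x + y \<in> {lincomb c l | c. length c = length l}"
    by (auto simp: lincomb_add)
next
  fix r x assume "x \<in> {lincomb c l | c. length c = length l}"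
  then show "r *s x \<in> {lincomb c l | c. length c = length l}"
    by (auto simp: lincomb_scale)
qed

lemma set_subset_list_span: "set l \<subseteq> list_span l"
proof
  fix x assume "x \<in> set l"
  then obtain k where "k < length l" "x = l!k" by (auto simp: in_set_conv_nth)
  then have "x = lincomb ((replicate (length l) 0)[k := 1]) l" by (simp add: lincomb_unit)
  then show "x \<in> list_span l" by (auto simp: list_span_eq)
qed

lemma list_span_subset: "vec.subspace V \<Longrightarrow> set l \<subseteq> V \<Longrightarrow> list_span l \<subseteq> V"
  unfolding list_span_def lincomb_def
  by (auto intro!: vec.subspace_sum vec.subspace_scale)

lemma inj_on_lincomb:
  assumes "list_independent l"
  shows "inj_on (\<lambda>c. lincomb c l) (bitlists (length l))"
proof (rule inj_onI)
  fix c d assume c: "c \<in> bitlists (length l)" and d: "d \<in> bitlists (length l)"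
    and "lincomb c l = lincomb d l"
  then have "lincomb (map2 (+) c d) l = 0" by (simp add: lincomb_add[symmetric] bitlists_def)
  then have "map2 (+) c d = replicate (length l) 0"
    using assms c d by (simp add: list_independent_def bitlists_def)
  then show "c = d"
    using c d by (auto simp: bitlists_def list_eq_iff_nth_eq bit_add_eq_0_iff)
qed

lemma card_list_span: "list_independent l \<Longrightarrow> card (list_span l) = 2 ^ length l"
  unfolding list_span_def by (simp add: card_image inj_on_lincomb card_bitlists)

lemma list_independent_snoc:
  "list_independent (l @ [b]) \<longleftrightarrow> list_independent l \<and> b \<notin> list_span l"
proof
  assume ind: "list_independent (l @ [b])"
  have "list_independent l" unfolding list_independent_def
  proof (intro allI impI)
    fix c assume "length c = length l" "lincomb c l = 0"
    then have "c @ [0] = replicate (Suc (length l)) 0"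
      using ind lincomb_snoc[of c l 0 b] by (simp add: list_independent_def)
    then show "c = replicate (length l) 0" by (simp flip: replicate_append_same)
  qed
  moreover have "b \<notin> list_span l"
  proof
    assume "b \<in> list_span l"
    then obtain c where "length c = length l" "b = lincomb c l" by (auto simp: list_span_eq)
    then have "c @ [1] = replicate (Suc (length l)) 0"
      using ind lincomb_snoc[of c l 1 b] by (simp add: list_independent_def)
    then show False by (simp flip: replicate_append_same)
  qed
  ultimately show "list_independent l \<and> b \<notin> list_span l" ..
next
  assume ind: "list_independent l \<and> b \<notin> list_span l"
  show "list_independent (l @ [b])" unfolding list_independent_def
  proof (intro allI impI)
    fix c' assume c': "length c' = length (l @ [b])" "lincomb c' (l @ [b]) = 0"
    then obtain c x where cx: "c' = c @ [x]" "length c = length l"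
      by (cases c' rule: rev_cases) auto
    then have sum0: "lincomb c l + x *s b = 0" using c' by (simp add: lincomb_snoc)
    show "c' = replicate (length (l @ [b])) 0"
    proof (cases x)
      case zero
      then have "c = replicate (length l) 0"
        using ind cx sum0 by (simp add: list_independent_def)
      then show ?thesis using cx zero by (simp flip: replicate_append_same)
    next
      case one
      then have "b \<in> list_span l"
        using cx sum0 by (auto simp: list_span_eq bitvec_add_eq_0_iff)
      then show ?thesis using ind by simp
    qed
  qed
qed

lemma obtain_list_basis:
  assumes V: "vec.subspace (V :: (bit^'n) set)"
  obtains l where "list_independent l" "list_span l = V" "length l = vec.dim V"
proof -
  obtain B where B: "finite B" "B \<subseteq> V" "vec.independent B" "vec.span B = V" "card B = vec.dim V"
    using vec.basis_subspace_exists[OF V] by blast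
  obtain l where l: "set l = B" "distinct l"
    using finite_distinct_list[OF B(1)] by blast
  have "list_span l = V"
  proof
    show "list_span l \<subseteq> V" using list_span_subset[OF V] l B by simp
    show "V \<subseteq> list_span l"
      using B(4) vec.span_minimal[OF _ subspace_list_span, of B l] set_subset_list_span[of l] l by simp
  qed
  moreover have "list_independent l" unfolding list_independent_def
  proof (intro allI impI, rule ccontr)
    fix c assume c: "length c = length l" "lincomb c l = 0" "c \<noteq> replicate (length l) 0"
    then obtain k where k: "k < length l" "c!k = 1"
      by (auto simp: list_eq_iff_nth_eq)
    define R where "R = (\<Sum>k'\<in>{..<length l} - {k}. (c!k') *s (l!k'))"
    have "lincomb c l = l!k + R"
      unfolding lincomb_def R_def using k by (simp add: sum.remove)
    then have "l!k = R" using c by (simp add: bitvec_add_eq_0_iff)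
    moreover have "R \<in> vec.span (B - {l!k})" unfolding R_def
      using l k by (intro vec.span_sum vec.span_scale vec.span_base) (auto simp: nth_eq_iff_index_eq)
    ultimately have "vec.dependent B"
      unfolding vec.dependent_def using l k by (metis nth_mem)
    then show False using B(3) by simp
  qed
  moreover have "length l = vec.dim V" using l B by (metis distinct_card)
  ultimately show ?thesis using that by blast
qed

lemma card_subspace: "vec.subspace (V :: (bit^'n) set) \<Longrightarrow> card V = 2 ^ vec.dim V"
  by (metis obtain_list_basis card_list_span)

lemma dim_list_span: "list_independent l \<Longrightarrow> vec.dim (list_span l) = length l"
proof -
  assume "list_independent l"
  then have "(2::nat) ^ vec.dim (list_span l) = 2 ^ length l"
    using card_list_span card_subspace[OF subspace_list_span] by metis
  then show ?thesis by simp
qed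

lemma list_span_eq_if_length_dim:
  assumes "vec.subspace (V :: (bit^'n) set)" "set l \<subseteq> V" "list_independent l" "length l = vec.dim V"
  shows "list_span l = V"
  using card_subset_eq[OF _ list_span_subset[OF assms(1,2)]] card_list_span[OF assms(3)]
    card_subspace[OF assms(1)] assms(4)
  by (simp add: vec.finite_Basis)

section \<open>Equidistributed tuples and balanced subspaces\<close>

text \<open>The \<open>w\<close> points are the \<open>w - 1\<close> coordinates together with an extra point \<open>None\<close>
  at which every vector vanishes.\<close>

definition ext_coord :: "bit^'n \<Rightarrow> 'n option \<Rightarrow> bit" where
  "ext_coord x p = (case p of None \<Rightarrow> 0 | Some t \<Rightarrow> x $ t)"

definition profile :: "(bit^'n) list \<Rightarrow> 'n option \<Rightarrow> bit list" where
  "profile l p = map (\<lambda>b. ext_coord b p) l"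

definition dotl :: "bit list \<Rightarrow> bit list \<Rightarrow> bit" where
  "dotl c a = (\<Sum>k<length a. c!k * a!k)"

definition fibre_size :: "(bit^'n::finite) list \<Rightarrow> bit list \<Rightarrow> nat" where
  "fibre_size l a = card {p. profile l p = a}"

definition equidistributed :: "(bit^'n::finite) list \<Rightarrow> bool" where
  "equidistributed l \<longleftrightarrow>
     (\<forall>a\<in>bitlists (length l). 2 ^ length l * fibre_size l a = CARD('n) + 1)"

definition weight :: "bit^'n::finite \<Rightarrow> nat" where
  "weight x = card {t. x $ t = 1}"

definition balanced :: "(bit^'n::finite) set \<Rightarrow> bool" where
  "balanced V \<longleftrightarrow> (\<forall>x\<in>V. x \<noteq> 0 \<longrightarrow> 2 * weight x = CARD('n) + 1)"

lemma length_profile [simp]: "length (profile l p) = length l"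
  by (simp add: profile_def)

lemma profile_in_bitlists [simp]: "profile l p \<in> bitlists (length l)"
  by (simp add: bitlists_def)

lemma profile_None: "profile l None = replicate (length l) 0"
  by (simp add: profile_def ext_coord_def map_replicate_const)

lemma profile_snoc: "profile (l @ [b]) p = profile l p @ [ext_coord b p]"
  by (simp add: profile_def)

lemma card_ext_coord_eq_1: "card {p. ext_coord x p = 1} = weight x"
proof -
  have "{p. ext_coord x p = 1} = Some ` {t. x $ t = 1}"
    by (auto simp: ext_coord_def split: option.splits)
  then show ?thesis by (simp add: weight_def card_image)
qed

lemma ext_coord_0 [simp]: "ext_coord 0 p = 0"
  by (simp add: ext_coord_def split: option.split)

lemma weight_0 [simp]: "weight 0 = 0"
  by (simp add: weight_def)

lemma ext_coord_lincomb:
  "length c = length l \<Longrightarrow> ext_coord (lincomb c l) p = dotl c (profile l p)"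
  by (cases p) (simp_all add: ext_coord_def lincomb_def dotl_def profile_def)

lemma dotl_commute: "length c = length a \<Longrightarrow> dotl c a = dotl a c"
  by (simp add: dotl_def mult.commute)

lemma dotl_add: "length x = length y \<Longrightarrow> dotl c (map2 (+) x y) = dotl c x + dotl c y"
  by (simp add: dotl_def distrib_left sum.distrib)

lemma dotl_replicate_0 [simp]: "dotl c (replicate s 0) = 0"
  by (simp add: dotl_def)

text \<open>Adding \<open>1\<close> to a coordinate where \<open>d\<close> is nonzero flips \<open>dotl d\<close>.\<close>

lemma card_dotl_eq_1:
  assumes "d \<in> bitlists s" "d \<noteq> replicate s 0"
  shows "2 * card {c \<in> bitlists s. dotl d c = 1} = 2 ^ s"
proof -
  obtain k where k: "k < s" "d!k = 1"
    using assms by (auto simp: bitlists_def list_eq_iff_nth_eq)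
  define flip where "flip c = c[k := c!k + 1]" for c :: "bit list"
  have flip_flip: "flip (flip c) = c" for c
    by (cases "k < length c") (simp_all add: flip_def list_update_beyond add.assoc)
  have dotl_flip: "dotl d (flip c) = dotl d c + 1" if "c \<in> bitlists s" for c
  proof -
    have "dotl d (flip c) = (\<Sum>k'<s. d!k' * c!k' + (if k' = k then 1 else 0))"
      unfolding dotl_def flip_def using that k
      by (intro sum.cong) (auto simp: bitlists_def nth_list_update distrib_left)
    then show ?thesis using that k by (simp add: sum.distrib dotl_def bitlists_def)
  qed
  have "bij_betw flip {c \<in> bitlists s. dotl d c = 1} {c \<in> bitlists s. dotl d c = 0}"
    by (rule bij_betw_byWitness[where f' = flip])
      (use flip_flip dotl_flip in \<open>auto simp: flip_def bitlists_def\<close>)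
  then have "card {c \<in> bitlists s. dotl d c = 1} = card {c \<in> bitlists s. dotl d c = 0}"
    by (rule bij_betw_same_card)
  moreover have "card (bitlists s) =
      card {c \<in> bitlists s. dotl d c = 1} + card {c \<in> bitlists s. dotl d c = 0}"
    by (subst card_Un_disjoint[symmetric]) (auto intro: arg_cong[where f = card])
  ultimately show ?thesis by (simp add: card_bitlists)
qed

lemma weight_lincomb_equidistributed:
  fixes l :: "(bit^'n::finite) list"
  assumes eq: "equidistributed l" and c: "c \<in> bitlists (length l)" "c \<noteq> replicate (length l) 0"
  shows "2 * weight (lincomb c l) = CARD('n) + 1"
proof -
  let ?s = "length l" and ?A = "{a \<in> bitlists (length l). dotl c a = 1}"
  have "{p. ext_coord (lincomb c l) p = 1} = (\<Union>a\<in>?A. {p. profile l p = a})"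
    using c by (auto simp: ext_coord_lincomb bitlists_def)
  then have "weight (lincomb c l) = (\<Sum>a\<in>?A. fibre_size l a)"
    unfolding card_ext_coord_eq_1[symmetric] fibre_size_def
    by (simp only:) (rule card_UN_disjoint, auto)
  then have "2 ^ ?s * weight (lincomb c l) = card ?A * (CARD('n) + 1)"
    using eq by (simp add: sum_distrib_left equidistributed_def)
  then have "2 ^ ?s * (2 * weight (lincomb c l)) = (2 * card ?A) * (CARD('n) + 1)"
    by simp
  also have "\<dots> = 2 ^ ?s * (CARD('n) + 1)"
    using card_dotl_eq_1[OF c] by simp
  finally show ?thesis by (metis mult_left_cancel power_not_zero zero_neq_numeral)
qed

lemma equidistributed_imp_independent:
  assumes "equidistributed (l :: (bit^'n::finite) list)"
  shows "list_independent l"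
  unfolding list_independent_def
proof (intro allI impI, rule ccontr)
  fix c assume "length c = length l" "lincomb c l = 0" "c \<noteq> replicate (length l) 0"
  then show False
    using weight_lincomb_equidistributed[OF assms, of c] by (simp add: bitlists_def)
qed

lemma equidistributed_imp_balanced:
  assumes "equidistributed (l :: (bit^'n::finite) list)"
  shows "balanced (list_span l)"
  unfolding balanced_def list_span_def
proof (intro ballI impI)
  fix x assume "x \<in> (\<lambda>c. lincomb c l) ` bitlists (length l)" "x \<noteq> 0"
  then obtain c where "c \<in> bitlists (length l)" "x = lincomb c l" "c \<noteq> replicate (length l) 0"
    using lincomb_replicate_0 by blast
  then show "2 * weight x = CARD('n) + 1"
    using weight_lincomb_equidistributed[OF assms] by simp
qed

definition char_bit :: "bit \<Rightarrow> real" where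
  "char_bit b = (if b = 0 then 1 else -1)"

lemma char_bit_add: "char_bit (x + y) = char_bit x * char_bit y"
  by (cases x; cases y) (simp_all add: char_bit_def)

lemma sum_char_bit:
  assumes "finite A"
  shows "(\<Sum>c\<in>A. char_bit (f c)) = real (card A) - 2 * real (card {c \<in> A. f c = 1})"
proof -
  have "char_bit b = 1 - 2 * (if b = 1 then 1 else 0)" for b
    by (cases b) (simp_all add: char_bit_def)
  then have "(\<Sum>c\<in>A. char_bit (f c)) = (\<Sum>c\<in>A. 1) - 2 * (\<Sum>c\<in>A. if f c = 1 then 1 else 0)"
    by (simp add: sum_subtractf sum_distrib_left)
  also have "(\<Sum>c\<in>A. if f c = 1 then 1 else 0) = (\<Sum>c\<in>{c \<in> A. f c = 1}. 1 :: real)"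
    by (rule sum.inter_filter[symmetric, OF assms])
  finally show ?thesis by simp
qed

lemma sum_char_dotl:
  assumes d: "d \<in> bitlists s"
  shows "(\<Sum>c\<in>bitlists s. char_bit (dotl c d)) = (if d = replicate s 0 then 2 ^ s else 0)"
proof (cases "d = replicate s 0")
  case True
  then show ?thesis by (simp add: char_bit_def card_bitlists)
next
  case False
  have "(\<Sum>c\<in>bitlists s. char_bit (dotl c d)) = (\<Sum>c\<in>bitlists s. char_bit (dotl d c))"
    using d by (intro sum.cong) (simp_all add: dotl_commute bitlists_def)
  also have "\<dots> = 0"
    using arg_cong[OF card_dotl_eq_1[OF d False], of real] by (simp add: sum_char_bit card_bitlists)
  finally show ?thesis using False by simp
qed

lemma sum_char_ext_coord:
  fixes x :: "bit^'n::finite"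
  shows "(\<Sum>p\<in>UNIV. char_bit (ext_coord x p)) = real (CARD('n) + 1) - 2 * real (weight x)"
  by (simp add: sum_char_bit card_ext_coord_eq_1)

lemma sum_char_lincomb_balanced:
  fixes l :: "(bit^'n::finite) list"
  assumes "list_independent l" "balanced (list_span l)" "c \<in> bitlists (length l)"
  shows "(\<Sum>p\<in>UNIV. char_bit (ext_coord (lincomb c l) p)) =
           (if c = replicate (length l) 0 then real (CARD('n) + 1) else 0)"
proof (cases "c = replicate (length l) 0")
  case True
  then show ?thesis by (simp add: char_bit_def)
next
  case False
  then have "lincomb c l \<noteq> 0" using assms(1,3) by (auto simp: list_independent_def bitlists_def)
  moreover have "lincomb c l \<in> list_span l" using assms(3) by (simp add: list_span_def)
  ultimately have "2 * weight (lincomb c l) = CARD('n) + 1"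
    using assms(2) by (simp add: balanced_def)
  then show ?thesis using False by (simp add: sum_char_ext_coord flip: of_nat_mult)
qed

text \<open>Fourier inversion on \<open>GF(2)^s\<close>: each fibre size is a character sum over the span of \<open>l\<close>,
  in which only the trivial character survives.\<close>

lemma balanced_imp_equidistributed:
  fixes l :: "(bit^'n::finite) list"
  assumes ind: "list_independent l" and bal: "balanced (list_span l)"
  shows "equidistributed l"
  unfolding equidistributed_def
proof
  let ?s = "length l" and ?W = "real (CARD('n) + 1)"
  fix a assume a: "a \<in> bitlists ?s"
  have indicator: "(\<Sum>c\<in>bitlists ?s. char_bit (dotl c (map2 (+) (profile l p) a))) =
      (if profile l p = a then 2 ^ ?s else 0)" for p
  proof -
    have "map2 (+) (profile l p) a \<in> bitlists ?s" using a by (simp add: bitlists_def)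
    moreover have "map2 (+) (profile l p) a = replicate ?s 0 \<longleftrightarrow> profile l p = a"
      using a by (auto simp: bitlists_def list_eq_iff_nth_eq bit_add_eq_0_iff)
    ultimately show ?thesis by (simp add: sum_char_dotl)
  qed
  have "real (2 ^ ?s * fibre_size l a) = (\<Sum>p\<in>UNIV. if profile l p = a then 2 ^ ?s else 0)"
    by (simp add: fibre_size_def sum.If_cases)
  also have "\<dots> = (\<Sum>p\<in>UNIV. \<Sum>c\<in>bitlists ?s. char_bit (dotl c (map2 (+) (profile l p) a)))"
    by (simp add: indicator)
  also have "\<dots> = (\<Sum>p\<in>UNIV. \<Sum>c\<in>bitlists ?s. char_bit (ext_coord (lincomb c l) p) * char_bit (dotl c a))"
    using a by (intro sum.cong refl) (simp add: dotl_add char_bit_add ext_coord_lincomb bitlists_def)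
  also have "\<dots> = (\<Sum>c\<in>bitlists ?s. char_bit (dotl c a) * (\<Sum>p\<in>UNIV. char_bit (ext_coord (lincomb c l) p)))"
    by (subst sum.swap) (simp add: sum_distrib_left mult.commute)
  also have "\<dots> = (\<Sum>c\<in>bitlists ?s. if c = replicate ?s 0 then char_bit (dotl c a) * ?W else 0)"
    using sum_char_lincomb_balanced[OF ind bal] by (intro sum.cong) simp_all
  also have "\<dots> = ?W"
    using a by (subst sum.delta[OF finite_bitlists]) (simp add: bitlists_def dotl_def char_bit_def)
  finally show "2 ^ ?s * fibre_size l a = CARD('n) + 1" by (metis of_nat_eq_iff)
qed

lemma equidistributed_iff: "equidistributed l \<longleftrightarrow> list_independent l \<and> balanced (list_span l)"
  using equidistributed_imp_independent equidistributed_imp_balanced balanced_imp_equidistributed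
  by blast

section \<open>Vectors orthogonal to a Steiner triple system\<close>

lemma orth_charvec: "orth x (charvec B) \<longleftrightarrow> even (card ({t. x $ t = 1} \<inter> B))"
proof -
  have "(\<Sum>t\<in>UNIV. x $ t * charvec B $ t) = (\<Sum>t\<in>UNIV. if t \<in> {t. x $ t = 1} \<inter> B then 1 else 0)"
  proof (intro sum.cong refl)
    fix t show "x $ t * charvec B $ t = (if t \<in> {t. x $ t = 1} \<inter> B then 1 else 0)"
      by (cases "x $ t") (simp_all add: charvec_def)
  qed
  also have "\<dots> = of_nat (card ({t. x $ t = 1} \<inter> B))"
    by (simp add: sum.If_cases Int_def)
  finally show ?thesis by (simp add: orth_def bit_of_nat)
qed

definition sts_block :: "'n set set \<Rightarrow> 'n \<Rightarrow> 'n \<Rightarrow> 'n set" where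
  "sts_block S a b = (THE B. B \<in> S \<and> {a, b} \<subseteq> B)"

lemma sts_block:
  assumes "is_STS S" "a \<noteq> b"
  shows "sts_block S a b \<in> S" "{a, b} \<subseteq> sts_block S a b"
proof -
  have "\<exists>!B. B \<in> S \<and> {a, b} \<subseteq> B" using assms by (simp add: is_STS_def)
  then have "sts_block S a b \<in> S \<and> {a, b} \<subseteq> sts_block S a b"
    unfolding sts_block_def by (rule theI')
  then show "sts_block S a b \<in> S" "{a, b} \<subseteq> sts_block S a b" by simp_all
qed

lemma sts_block_eq:
  assumes "is_STS S" "a \<noteq> b" "B \<in> S" "{a, b} \<subseteq> B"
  shows "sts_block S a b = B"
  using assms sts_block[OF assms(1,2)] unfolding is_STS_def by blast

lemma bij_betw_sts_block:
  assumes S: "is_STS S" and "x0 \<notin> A"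
    and meets: "\<And>B. B \<in> S \<Longrightarrow> x0 \<in> B \<Longrightarrow> card (B \<inter> A) = 1"
  shows "bij_betw (sts_block S x0) A {B \<in> S. x0 \<in> B}"
proof (rule bij_betw_imageI)
  have block: "sts_block S x0 x \<in> S" "{x0, x} \<subseteq> sts_block S x0 x" if "x \<in> A" for x
    using sts_block[OF S, of x0 x] that \<open>x0 \<notin> A\<close> by auto
  show "inj_on (sts_block S x0) A"
  proof (rule inj_onI)
    fix x x' assume x: "x \<in> A" "x' \<in> A" "sts_block S x0 x = sts_block S x0 x'"
    then have "{x, x'} \<subseteq> sts_block S x0 x \<inter> A" using block by auto
    moreover obtain a where "sts_block S x0 x \<inter> A = {a}"
      using meets[of "sts_block S x0 x"] block[OF x(1)] by (auto simp: card_1_singleton_iff)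
    ultimately show "x = x'" by auto
  qed
  show "sts_block S x0 ` A = {B \<in> S. x0 \<in> B}"
  proof
    show "sts_block S x0 ` A \<subseteq> {B \<in> S. x0 \<in> B}" using block by auto
    show "{B \<in> S. x0 \<in> B} \<subseteq> sts_block S x0 ` A"
    proof
      fix B assume B: "B \<in> {B \<in> S. x0 \<in> B}"
      then obtain a where a: "B \<inter> A = {a}" using meets by (auto simp: card_1_singleton_iff)
      then have "sts_block S x0 a = B" using B \<open>x0 \<notin> A\<close> by (intro sts_block_eq[OF S]) auto
      then show "B \<in> sts_block S x0 ` A" using a by blast
    qed
  qed
qed

lemma card_block_inter_even_set:
  assumes "is_STS S" "even (card (B \<inter> X))" "B \<in> S" "x0 \<in> B" "x0 \<in> X"
  shows "card (B \<inter> (X - {x0})) = 1" "card (B \<inter> - X) = 1"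
proof -
  have "card B = 3" using assms by (simp add: is_STS_def)
  then have fin: "finite B" by (simp add: card_ge_0_finite)
  have "card (B \<inter> X) \<le> card B" "0 < card (B \<inter> X)"
    using fin assms(4,5) by (auto simp: card_mono card_gt_0_iff)
  moreover have "card B = card (B \<inter> X) + card (B \<inter> - X)"
    using fin by (subst card_Un_disjoint[symmetric]) (auto intro: arg_cong[where f = card])
  moreover note \<open>card B = 3\<close>
  ultimately have "card (B \<inter> X) = 2" "card (B \<inter> - X) = 1" using assms(2) by presburger+
  moreover have "B \<inter> (X - {x0}) = B \<inter> X - {x0}" by blast
  ultimately show "card (B \<inter> (X - {x0})) = 1" "card (B \<inter> - X) = 1"
    using assms(4,5) by (simp_all add: card_Diff_singleton)
qed

lemma card_even_intersection_STS:
  fixes X :: "'n::finite set"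
  assumes S: "is_STS S" and even: "\<forall>B\<in>S. even (card (B \<inter> X))" and x0: "x0 \<in> X"
  shows "2 * card X = CARD('n) + 1"
proof -
  have "card (X - {x0}) = card {B \<in> S. x0 \<in> B}"
    using card_block_inter_even_set(1)[OF S] even x0
    by (intro bij_betw_same_card[OF bij_betw_sts_block[OF S]]) auto
  also have "\<dots> = card (- X)"
    using card_block_inter_even_set(2)[OF S] even x0
    by (intro bij_betw_same_card[OF bij_betw_sts_block[OF S], symmetric]) auto
  finally have "card (X - {x0}) = card (- X)" .
  moreover have "card X + card (- X) = CARD('n)"
    using card_Un_disjoint[of X "- X"] by (simp add: Compl_partition)
  moreover have "card (X - {x0}) = card X - 1" "card X \<noteq> 0"
    using x0 by (auto simp: card_Diff_singleton)
  ultimately show ?thesis by linarith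
qed

lemma STS_orthogonal_imp_weight:
  fixes x :: "bit^'n::finite"
  assumes "is_STS S" "\<forall>B\<in>S. orth x (charvec B)" "x \<noteq> 0"
  shows "2 * weight x = CARD('n) + 1"
proof -
  obtain t where "x $ t = 1" using assms(3) by (auto simp: vec_eq_iff)
  then show ?thesis using assms(1,2) card_even_intersection_STS[of S "{t. x $ t = 1}" t]
    by (simp add: weight_def orth_charvec Int_commute)
qed

lemma balanced_if_Ddot: "V \<in> Ddot k \<Longrightarrow> vec.subspace V \<and> vec.dim V = k \<and> balanced V"
  unfolding Ddot_def balanced_def using STS_orthogonal_imp_weight by blast

section \<open>When \<open>Ddot j\<close> is nonempty it consists of all balanced subspaces\<close>

lemma obtain_bij_same_fibre_card:
  fixes f g :: "'a::finite \<Rightarrow> 'b"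
  assumes "\<And>y. card {t. f t = y} = card {t. g t = y}"
  obtains \<sigma> where "bij \<sigma>" "\<And>t. g (\<sigma> t) = f t"
proof -
  have "\<forall>y. \<exists>h. bij_betw h {t. f t = y} {t. g t = y}"
    using assms by (auto intro: finite_same_card_bij)
  then obtain H where H: "\<And>y. bij_betw (H y) {t. f t = y} {t. g t = y}"
    by (metis choice)
  define \<sigma> where "\<sigma> t = H (f t) t" for t
  have g\<sigma>: "g (\<sigma> t) = f t" for t
    using bij_betw_apply[OF H[of "f t"], of t] by (simp add: \<sigma>_def)
  have "inj \<sigma>"
  proof (rule injI)
    fix t t' assume eq: "\<sigma> t = \<sigma> t'"
    then have "f t = f t'" using g\<sigma>[of t] g\<sigma>[of t'] by simp
    then show "t = t'"
      using eq H[of "f t"] by (auto simp: \<sigma>_def bij_betw_def dest: inj_onD)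
  qed
  then have "bij \<sigma>" by (simp add: bij_def finite_UNIV_inj_surj)
  then show ?thesis using that g\<sigma> by blast
qed

lemma fibre_size_Some:
  "fibre_size l a = card {t. profile l (Some t) = a} + (if a = replicate (length l) 0 then 1 else 0)"
proof -
  have "{p. profile l p = a} =
      Some ` {t. profile l (Some t) = a} \<union> (if a = replicate (length l) 0 then {None} else {})"
  proof (rule set_eqI)
    fix p show "p \<in> {p. profile l p = a} \<longleftrightarrow>
        p \<in> Some ` {t. profile l (Some t) = a} \<union> (if a = replicate (length l) 0 then {None} else {})"
      by (cases p) (auto simp: profile_None)
  qed
  then show ?thesis
    by (simp add: fibre_size_def card_Un_disjoint card_image)
qed

lemma equidistributed_fibre_size_eq:
  fixes l l' :: "(bit^'n::finite) list"
  assumes "equidistributed l" "equidistributed l'" "length l = length l'"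
  shows "fibre_size l a = fibre_size l' a"
proof (cases "a \<in> bitlists (length l)")
  case True
  then show ?thesis using assms unfolding equidistributed_def
    by (metis mult_left_cancel power_not_zero zero_neq_numeral)
next
  case False
  then have "profile l p \<noteq> a" "profile l' p \<noteq> a" for p
    using assms(3) profile_in_bitlists[of l p] profile_in_bitlists[of l' p] by auto
  then show ?thesis by (simp add: fibre_size_def)
qed

lemma is_STS_image:
  fixes \<sigma> :: "'a \<Rightarrow> 'b"
  assumes \<sigma>: "bij \<sigma>" and S: "is_STS S"
  shows "is_STS ((`) \<sigma> ` S)"
  unfolding is_STS_def
proof (intro conjI ballI allI impI)
  fix B assume "B \<in> (`) \<sigma> ` S"
  then obtain B0 where "B0 \<in> S" "B = \<sigma> ` B0" by blast
  moreover have "inj_on \<sigma> B0" using bij_is_inj[OF \<sigma>] by (rule inj_on_subset) simp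
  ultimately show "card B = 3" using S by (simp add: is_STS_def card_image)
next
  fix x y :: 'b assume "x \<noteq> y"
  have mem: "z \<in> \<sigma> ` B \<longleftrightarrow> inv \<sigma> z \<in> B" for z B
  proof
    assume "z \<in> \<sigma> ` B"
    then show "inv \<sigma> z \<in> B" using bij_is_inj[OF \<sigma>] by auto
  next
    assume "inv \<sigma> z \<in> B"
    then show "z \<in> \<sigma> ` B"
      by (intro image_eqI[of _ _ "inv \<sigma> z"]) (simp_all add: surj_f_inv_f[OF bij_is_surj[OF \<sigma>]])
  qed
  have "inv \<sigma> x \<noteq> inv \<sigma> y"
    using \<open>x \<noteq> y\<close> bij_is_inj[OF bij_imp_bij_inv[OF \<sigma>]] by (simp add: inj_eq)
  then have "\<exists>!B0. B0 \<in> S \<and> {inv \<sigma> x, inv \<sigma> y} \<subseteq> B0"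
    using S by (simp add: is_STS_def)
  then obtain B0 where B0: "B0 \<in> S" "{inv \<sigma> x, inv \<sigma> y} \<subseteq> B0"
    and unique: "\<And>B. B \<in> S \<Longrightarrow> {inv \<sigma> x, inv \<sigma> y} \<subseteq> B \<Longrightarrow> B = B0"
    by blast
  show "\<exists>!B. B \<in> (`) \<sigma> ` S \<and> {x, y} \<subseteq> B"
  proof (rule ex1I[of _ "\<sigma> ` B0"])
    show "\<sigma> ` B0 \<in> (`) \<sigma> ` S \<and> {x, y} \<subseteq> \<sigma> ` B0"
      using B0 mem[of x B0] mem[of y B0] by simp
  next
    fix B assume B: "B \<in> (`) \<sigma> ` S \<and> {x, y} \<subseteq> B"
    then obtain B1 where "B1 \<in> S" "B = \<sigma> ` B1" by blast
    moreover have "{inv \<sigma> x, inv \<sigma> y} \<subseteq> B1"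
      using B mem[of x B1] mem[of y B1] calculation by simp
    ultimately show "B = \<sigma> ` B0" using unique by blast
  qed
qed

lemma orth_charvec_image:
  assumes \<sigma>: "bij \<sigma>" and vu: "\<And>t. v $ \<sigma> t = u $ t"
  shows "orth v (charvec (\<sigma> ` B)) \<longleftrightarrow> orth u (charvec B)"
proof -
  have "(\<Sum>t\<in>UNIV. v $ t * charvec (\<sigma> ` B) $ t) = (\<Sum>t\<in>UNIV. v $ \<sigma> t * charvec (\<sigma> ` B) $ \<sigma> t)"
    by (rule sum.reindex_bij_betw[symmetric]) (use \<sigma> in simp)
  also have "\<dots> = (\<Sum>t\<in>UNIV. u $ t * charvec B $ t)"
    using bij_is_inj[OF \<sigma>] by (simp add: vu charvec_def inj_image_mem_iff)
  finally show ?thesis by (simp add: orth_def)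
qed

lemma balanced_in_Ddot:
  fixes V :: "(bit^'n::finite) set"
  assumes "Ddot j \<noteq> ({} :: (bit^'n) set set)"
    and V: "vec.subspace V" "vec.dim V = j" "balanced V"
  shows "V \<in> Ddot j"
proof -
  obtain V0 :: "(bit^'n) set" and S0 where V0: "vec.subspace V0" "vec.dim V0 = j"
    and S0: "is_STS S0" "\<forall>v\<in>V0. \<forall>B\<in>S0. orth v (charvec B)"
    using assms(1) unfolding Ddot_def by blast
  then have "balanced V0" using balanced_if_Ddot[of V0 j] by (auto simp: Ddot_def)
  obtain l0 where l0: "list_independent l0" "list_span l0 = V0" "length l0 = j"
    using obtain_list_basis[OF V0(1)] V0 by metis
  obtain l where l: "list_independent l" "list_span l = V" "length l = j"
    using obtain_list_basis[OF V(1)] V by metis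
  have "equidistributed l0" "equidistributed l"
    using balanced_imp_equidistributed l0 l V \<open>balanced V0\<close> by auto
  then have "card {t. profile l0 (Some t) = a} = card {t. profile l (Some t) = a}" for a
    using equidistributed_fibre_size_eq fibre_size_Some[of l0 a] fibre_size_Some[of l a] l0 l
    by (metis add_right_cancel)
  then obtain \<sigma> where \<sigma>: "bij \<sigma>" "\<And>t. profile l (Some (\<sigma> t)) = profile l0 (Some t)"
    using obtain_bij_same_fibre_card by metis
  have "(l!k) $ \<sigma> t = (l0!k) $ t" if "k < j" for k t
    using arg_cong[OF \<sigma>(2)[of t], of "\<lambda>a. a ! k"] that l l0 by (simp add: profile_def ext_coord_def)
  then have lincomb_\<sigma>: "lincomb c l $ \<sigma> t = lincomb c l0 $ t" if "length c = j" for c t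
    using that l l0 by (simp add: lincomb_component)
  have "\<forall>v\<in>V. \<forall>B\<in>(`) \<sigma> ` S0. orth v (charvec B)"
  proof (intro ballI)
    fix v B assume "v \<in> V" "B \<in> (`) \<sigma> ` S0"
    then obtain c B0 where "length c = j" "v = lincomb c l" "B0 \<in> S0" "B = \<sigma> ` B0"
      using l by (auto simp: list_span_eq)
    moreover have "lincomb c l0 \<in> V0" if "length c = j" for c
      using that l0 by (auto simp: list_span_eq)
    ultimately show "orth v (charvec B)"
      using S0(2) orth_charvec_image[OF \<sigma>(1) lincomb_\<sigma>] by blast
  qed
  then show ?thesis
    unfolding Ddot_def using V is_STS_image[OF \<sigma>(1) S0(1)] by blast
qed

lemma Ddot_eq_balanced:
  assumes "Ddot j \<noteq> ({} :: (bit^'n::finite) set set)"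
  shows "(Ddot j :: (bit^'n) set set) = {V. vec.subspace V \<and> vec.dim V = j \<and> balanced V}"
  using balanced_in_Ddot[OF assms] balanced_if_Ddot by blast

lemma pow2_dvd_if_Ddot_nonempty:
  assumes "Ddot j \<noteq> ({} :: (bit^'n::finite) set set)"
  shows "2 ^ j dvd CARD('n) + 1"
proof -
  obtain V :: "(bit^'n) set" where "vec.subspace V" "vec.dim V = j" "balanced V"
    using assms balanced_if_Ddot by blast
  moreover obtain l where "list_independent l" "list_span l = V" "length l = j"
    using obtain_list_basis calculation by metis
  ultimately have "equidistributed l" using balanced_imp_equidistributed by blast
  then have "2 ^ j * fibre_size l (replicate j 0) = CARD('n) + 1"
    using \<open>length l = j\<close> by (simp add: equidistributed_def bitlists_def)
  then show ?thesis by (metis dvd_triv_left)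
qed

section \<open>Counting equidistributed extensions\<close>

definition halving_vectors :: "(bit^'n::finite) list \<Rightarrow> (bit^'n) set" where
  "halving_vectors l = {b. \<forall>a\<in>bitlists (length l).
     2 * card {p. profile l p = a \<and> ext_coord b p = 1} = fibre_size l a}"

lemma fibre_size_snoc:
  "fibre_size (l @ [b]) (a @ [x]) = card {p. profile l p = a \<and> ext_coord b p = x}"
  by (simp add: fibre_size_def profile_snoc)

lemma fibre_size_split:
  "fibre_size l a = card {p. profile l p = a \<and> ext_coord b p = 0} +
     card {p. profile l p = a \<and> ext_coord b p = 1}"
proof -
  have "{p. profile l p = a} =
      {p. profile l p = a \<and> ext_coord b p = 0} \<union> {p. profile l p = a \<and> ext_coord b p = 1}"
    by (auto intro: bit.exhaust)
  moreover have "card ({p. profile l p = a \<and> ext_coord b p = 0} \<union> {p. profile l p = a \<and> ext_coord b p = 1}) =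
      card {p. profile l p = a \<and> ext_coord b p = 0} + card {p. profile l p = a \<and> ext_coord b p = 1}"
    by (rule card_Un_disjoint) auto
  ultimately show ?thesis unfolding fibre_size_def by simp
qed

lemma equidistributed_snoc:
  fixes l :: "(bit^'n::finite) list"
  shows "equidistributed (l @ [b]) \<longleftrightarrow> equidistributed l \<and> b \<in> halving_vectors l"
proof -
  let ?s = "length l" and ?W = "CARD('n) + 1"
  let ?N = "\<lambda>a x. card {p. profile l p = a \<and> ext_coord b p = x}"
  have "equidistributed (l @ [b]) \<longleftrightarrow> (\<forall>a\<in>bitlists ?s. \<forall>x. 2 ^ Suc ?s * ?N a x = ?W)"
    unfolding equidistributed_def
  proof (intro iffI ballI allI)
    fix a x assume all: "\<forall>a'\<in>bitlists (length (l @ [b])). 2 ^ length (l @ [b]) * fibre_size (l @ [b]) a' = ?W"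
      and a: "a \<in> bitlists ?s"
    have "a @ [x] \<in> bitlists (length (l @ [b]))" using a by (simp add: bitlists_def)
    then have "2 ^ length (l @ [b]) * fibre_size (l @ [b]) (a @ [x]) = ?W" using all by blast
    then show "2 ^ Suc ?s * ?N a x = ?W" by (simp add: fibre_size_snoc)
  next
    fix a' assume "\<forall>a\<in>bitlists ?s. \<forall>x. 2 ^ Suc ?s * ?N a x = ?W" "a' \<in> bitlists (length (l @ [b]))"
    then show "2 ^ length (l @ [b]) * fibre_size (l @ [b]) a' = ?W"
      by (auto simp: bitlists_Suc fibre_size_snoc)
  qed
  also have "\<dots> \<longleftrightarrow> (\<forall>a\<in>bitlists ?s. 2 ^ ?s * fibre_size l a = ?W \<and> 2 * ?N a 1 = fibre_size l a)"
  proof (intro ball_cong refl iffI conjI allI)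
    fix a assume "\<forall>x. 2 ^ Suc ?s * ?N a x = ?W"
    then have N: "2 ^ Suc ?s * ?N a 0 = ?W" "2 ^ Suc ?s * ?N a 1 = ?W" by blast+
    then have "2 ^ Suc ?s * ?N a 0 = 2 ^ Suc ?s * ?N a 1" by simp
    then have "?N a 0 = ?N a 1" by simp
    with N show "2 ^ ?s * fibre_size l a = ?W" "2 * ?N a 1 = fibre_size l a"
      using fibre_size_split[of l a b] by (simp_all add: algebra_simps)
  next
    fix a x assume H: "2 ^ ?s * fibre_size l a = ?W \<and> 2 * ?N a 1 = fibre_size l a"
    then have "2 ^ ?s * (2 * ?N a 1) = ?W" by simp
    moreover have "?N a 0 = ?N a 1" using H fibre_size_split[of l a b] by simp
    ultimately show "2 ^ Suc ?s * ?N a x = ?W" by (cases x) (simp_all add: ac_simps)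
  qed
  finally show ?thesis by (auto simp: equidistributed_def halving_vectors_def)
qed

lemma card_subsets_meeting_partition:
  assumes A: "finite A" and disj: "disjoint_family_on F A" and fin: "\<And>a. a \<in> A \<Longrightarrow> finite (F a)"
  shows "card {S. S \<subseteq> (\<Union>a\<in>A. F a) \<and> (\<forall>a\<in>A. card (F a \<inter> S) = h)} =
           (\<Prod>a\<in>A. card (F a) choose h)"
proof -
  let ?Q = "{S. S \<subseteq> (\<Union>a\<in>A. F a) \<and> (\<forall>a\<in>A. card (F a \<inter> S) = h)}"
  let ?P = "PiE A (\<lambda>a. {T. T \<subseteq> F a \<and> card T = h})"
  have part: "\<phi> a \<subseteq> F a \<and> card (\<phi> a) = h" if "\<phi> \<in> ?P" "a \<in> A" for \<phi> a
    using PiE_mem[OF that] by simp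
  have own_part: "F a \<inter> (\<Union>a'\<in>A. \<phi> a') = \<phi> a" if \<phi>: "\<phi> \<in> ?P" and a: "a \<in> A" for \<phi> a
  proof
    show "F a \<inter> (\<Union>a'\<in>A. \<phi> a') \<subseteq> \<phi> a"
    proof
      fix t assume "t \<in> F a \<inter> (\<Union>a'\<in>A. \<phi> a')"
      then obtain a' where a': "a' \<in> A" "t \<in> \<phi> a'" and "t \<in> F a" by blast
      moreover have "t \<in> F a'" using part[OF \<phi> a'(1)] a'(2) by blast
      ultimately have "a = a'" using disjoint_family_onD[OF disj a a'(1)] by blast
      then show "t \<in> \<phi> a" using a'(2) by simp
    qed
    show "\<phi> a \<subseteq> F a \<inter> (\<Union>a'\<in>A. \<phi> a')" using part[OF \<phi> a] a by blast
  qed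
  have "bij_betw (\<lambda>S. restrict (\<lambda>a. F a \<inter> S) A) ?Q ?P"
  proof (rule bij_betw_byWitness[where f' = "\<lambda>\<phi>. \<Union>a\<in>A. \<phi> a"])
    show "\<forall>S\<in>?Q. (\<Union>a\<in>A. restrict (\<lambda>a. F a \<inter> S) A a) = S" by auto
    show "\<forall>\<phi>\<in>?P. restrict (\<lambda>a. F a \<inter> (\<Union>a'\<in>A. \<phi> a')) A = \<phi>"
    proof
      fix \<phi> assume \<phi>: "\<phi> \<in> ?P"
      show "restrict (\<lambda>a. F a \<inter> (\<Union>a'\<in>A. \<phi> a')) A = \<phi>"
        using own_part[OF \<phi>] PiE_arb[OF \<phi>] by (auto simp: restrict_def fun_eq_iff)
    qed
    show "(\<lambda>S. restrict (\<lambda>a. F a \<inter> S) A) ` ?Q \<subseteq> ?P" by auto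
    show "(\<lambda>\<phi>. \<Union>a\<in>A. \<phi> a) ` ?P \<subseteq> ?Q"
    proof (rule image_subsetI)
      fix \<phi> assume \<phi>: "\<phi> \<in> ?P"
      show "(\<Union>a\<in>A. \<phi> a) \<in> ?Q" using own_part[OF \<phi>] part[OF \<phi>] by auto
    qed
  qed
  then have "card ?Q = card ?P" by (rule bij_betw_same_card)
  also have "\<dots> = (\<Prod>a\<in>A. card (F a) choose h)"
    using A fin by (simp add: card_PiE n_subsets)
  finally show ?thesis .
qed

text \<open>The support of a halving vector contains exactly half of each of the \<open>2^s\<close> fibres, of size
  \<open>m = W / 2^s\<close>; the fibre of the zero profile contains the extra point \<open>None\<close>, which is never
  in the support, whence the factor with \<open>m - 1\<close>.\<close>

definition halving_count :: "nat \<Rightarrow> nat \<Rightarrow> nat" where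
  "halving_count W s =
     (let m = W div 2 ^ s in (m choose (m div 2)) ^ (2 ^ s - 1) * ((m - 1) choose (m div 2)))"

lemma fibre_size_equidistributed:
  assumes "equidistributed (l :: (bit^'n::finite) list)" "a \<in> bitlists (length l)"
  shows "fibre_size l a = (CARD('n) + 1) div 2 ^ length l"
  using assms unfolding equidistributed_def
  by (metis nonzero_mult_div_cancel_left power_not_zero zero_neq_numeral)

lemma card_profile_ext_coord_eq_1:
  "card {p. profile l p = a \<and> ext_coord b p = 1} = card ({t. profile l (Some t) = a} \<inter> {t. b $ t = 1})"
proof -
  have "{p. profile l p = a \<and> ext_coord b p = 1} = Some ` ({t. profile l (Some t) = a} \<inter> {t. b $ t = 1})"
  proof (rule set_eqI)
    fix p show "p \<in> {p. profile l p = a \<and> ext_coord b p = 1} \<longleftrightarrow>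
        p \<in> Some ` ({t. profile l (Some t) = a} \<inter> {t. b $ t = 1})"
      by (cases p) (auto simp: ext_coord_def)
  qed
  then show ?thesis by (simp add: card_image)
qed

lemma card_halving_vectors:
  fixes l :: "(bit^'n::finite) list"
  assumes eq: "equidistributed l" and dvd: "2 ^ Suc (length l) dvd CARD('n) + 1"
  shows "card (halving_vectors l) = halving_count (CARD('n) + 1) (length l)"
proof -
  define m where "m = (CARD('n) + 1) div 2 ^ length l"
  let ?s = "length l" and ?z = "replicate (length l) (0::bit)" and ?h = "m div 2"
  define F where "F a = {t. profile l (Some t) = a}" for a
  define supp where "supp b = {t. (b::bit^'n) $ t = 1}" for b
  let ?Q = "{S. S \<subseteq> (\<Union>a\<in>bitlists ?s. F a) \<and> (\<forall>a\<in>bitlists ?s. card (F a \<inter> S) = ?h)}"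
  obtain q where "CARD('n) + 1 = 2 ^ Suc ?s * q" using dvd by (elim dvdE)
  then have half: "2 * x = m \<longleftrightarrow> x = ?h" for x by (auto simp: m_def)
  have fibre_m: "fibre_size l a = m" if "a \<in> bitlists ?s" for a
    using fibre_size_equidistributed[OF eq that] by (simp add: m_def)
  have halving_iff: "b \<in> halving_vectors l \<longleftrightarrow> (\<forall>a\<in>bitlists ?s. card (F a \<inter> supp b) = ?h)" for b
    by (simp add: halving_vectors_def card_profile_ext_coord_eq_1 F_def supp_def fibre_m half
        cong: ball_cong)
  have "bij_betw supp (halving_vectors l) ?Q"
  proof (rule bij_betw_byWitness[where f' = charvec])
    show "\<forall>b\<in>halving_vectors l. charvec (supp b) = b"
      by (auto simp: charvec_def supp_def vec_eq_iff intro: bit.exhaust)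
    show "\<forall>S\<in>?Q. supp (charvec S) = S" by (auto simp: supp_def charvec_def)
    show "supp ` halving_vectors l \<subseteq> ?Q" using halving_iff by (auto simp: F_def)
    show "charvec ` ?Q \<subseteq> halving_vectors l"
      using halving_iff by (auto simp: supp_def charvec_def)
  qed
  then have "card (halving_vectors l) = card ?Q" by (rule bij_betw_same_card)
  also have "\<dots> = (\<Prod>a\<in>bitlists ?s. card (F a) choose ?h)"
    by (rule card_subsets_meeting_partition) (auto simp: disjoint_family_on_def F_def)
  also have "\<dots> = (card (F ?z) choose ?h) * (\<Prod>a\<in>bitlists ?s - {?z}. card (F a) choose ?h)"
    by (rule prod.remove) (simp, simp add: bitlists_def)
  also have "\<dots> = ((m - 1) choose ?h) * (m choose ?h) ^ (2 ^ ?s - 1)"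
  proof -
    have card_F: "card (F a) = m - (if a = ?z then 1 else 0)" if "a \<in> bitlists ?s" for a
      using fibre_size_Some[of l a] fibre_m[OF that] by (simp add: F_def)
    have z: "?z \<in> bitlists ?s" by (simp add: bitlists_def)
    have "(\<Prod>a\<in>bitlists ?s - {?z}. card (F a) choose ?h) = (\<Prod>a\<in>bitlists ?s - {?z}. m choose ?h)"
      using card_F by (intro prod.cong) auto
    also have "\<dots> = (m choose ?h) ^ (2 ^ ?s - 1)"
      using z by (simp add: card_Diff_singleton card_bitlists)
    finally show ?thesis using card_F[OF z] by simp
  qed
  finally show ?thesis by (simp add: halving_count_def m_def Let_def)
qed

lemma finite_lists_length_eq_finite_type: "finite {xs :: 'a::finite list. length xs = k}"
  using finite_lists_length_eq[of "UNIV :: 'a set" k] by simp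

lemma card_lists_by_extension:
  fixes P :: "'a::finite list \<Rightarrow> bool"
  assumes "P []"
    and prefix_closed: "\<And>bs b. P (bs @ [b]) \<Longrightarrow> P bs"
    and extensions: "\<And>bs. P bs \<Longrightarrow> length bs < k \<Longrightarrow> card {b. P (bs @ [b])} = N (length bs)"
  shows "card {bs. length bs = k \<and> P bs} = (\<Prod>r<k. N r)"
  using extensions
proof (induction k)
  case 0
  have "{bs. length bs = 0 \<and> P bs} = {[]}" using \<open>P []\<close> by auto
  then show ?case by simp
next
  case (Suc k)
  let ?L = "\<lambda>k. {bs. length bs = k \<and> P bs}" and ?snoc = "\<lambda>(bs, b). bs @ [b]"
  have L_Suc: "?L (Suc k) = ?snoc ` (SIGMA bs:?L k. {b. P (bs @ [b])})"
  proof
    show "?L (Suc k) \<subseteq> ?snoc ` (SIGMA bs:?L k. {b. P (bs @ [b])})"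
    proof
      fix cs assume "cs \<in> ?L (Suc k)"
      then obtain bs b where "cs = bs @ [b]" "length bs = k" "P (bs @ [b])"
        by (cases cs rule: rev_cases) auto
      then show "cs \<in> ?snoc ` (SIGMA bs:?L k. {b. P (bs @ [b])})"
        using prefix_closed by (auto intro!: image_eqI[of _ _ "(bs, b)"])
    qed
  qed auto
  have "finite (?L k)"
    using finite_lists_length_eq_finite_type[of k] by (auto elim: finite_subset[rotated])
  have "card (?L (Suc k)) = card (SIGMA bs:?L k. {b. P (bs @ [b])})"
    unfolding L_Suc by (rule card_image) (rule inj_onI, auto)
  also have "\<dots> = (\<Sum>bs\<in>?L k. card {b. P (bs @ [b])})"
    using \<open>finite (?L k)\<close> by (simp add: card_SigmaI)
  also have "\<dots> = card (?L k) * N k" using Suc.prems by simp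
  also have "card (?L k) = (\<Prod>r<k. N r)" using Suc by simp
  finally show ?case by (simp add: mult.commute)
qed

lemma card_equidistributed_extensions:
  fixes us :: "(bit^'n::finite) list"
  assumes eq: "equidistributed us" and dvd: "2 ^ j dvd CARD('n) + 1" and "length us + k \<le> j"
  shows "card {bs. length bs = k \<and> equidistributed (us @ bs)} =
           (\<Prod>r<k. halving_count (CARD('n) + 1) (length us + r))"
proof (rule card_lists_by_extension)
  show "equidistributed (us @ [])" using eq by simp
  show "equidistributed (us @ bs)" if "equidistributed (us @ bs @ [b])" for bs b
    using that equidistributed_snoc[of "us @ bs"] by simp
next
  fix bs assume bs: "equidistributed (us @ bs)" "length bs < k"
  have "2 ^ Suc (length (us @ bs)) dvd (2::nat) ^ j"
    using bs assms(3) by (intro le_imp_power_dvd) simp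
  then have "2 ^ Suc (length (us @ bs)) dvd CARD('n) + 1" using dvd by (rule dvd_trans)
  then have "card (halving_vectors (us @ bs)) = halving_count (CARD('n) + 1) (length us + length bs)"
    using card_halving_vectors[OF bs(1)] by simp
  moreover have "{b. equidistributed (us @ bs @ [b])} = halving_vectors (us @ bs)"
    using bs(1) equidistributed_snoc[of "us @ bs"] by auto
  ultimately show "card {b. equidistributed (us @ bs @ [b])} =
      halving_count (CARD('n) + 1) (length us + length bs)" by simp
qed

lemma card_independent_extensions:
  fixes us :: "(bit^'n::finite) list"
  assumes V: "vec.subspace V" "vec.dim V = j" and us: "list_independent us" "set us \<subseteq> V"
  shows "card {bs. length bs = k \<and> set bs \<subseteq> V \<and> list_independent (us @ bs)} =
           (\<Prod>r<k. 2 ^ j - 2 ^ (length us + r))"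
proof (rule card_lists_by_extension)
  show "set [] \<subseteq> V \<and> list_independent (us @ [])" using us by simp
  show "set bs \<subseteq> V \<and> list_independent (us @ bs)"
    if "set (bs @ [b]) \<subseteq> V \<and> list_independent (us @ bs @ [b])" for bs b
    using that list_independent_snoc[of "us @ bs"] by simp
next
  fix bs assume bs: "set bs \<subseteq> V \<and> list_independent (us @ bs)"
  have "{b. set (bs @ [b]) \<subseteq> V \<and> list_independent (us @ bs @ [b])} = V - list_span (us @ bs)"
    using bs list_independent_snoc[of "us @ bs"] by auto
  moreover have "list_span (us @ bs) \<subseteq> V" using list_span_subset[OF V(1)] bs us by simp
  moreover have "card (list_span (us @ bs)) = 2 ^ (length us + length bs)"
    using card_list_span[of "us @ bs"] bs by simp
  ultimately show "card {b. set (bs @ [b]) \<subseteq> V \<and> list_independent (us @ bs @ [b])} =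
      2 ^ j - 2 ^ (length us + length bs)"
    using card_subspace[OF V(1)] V(2) by (simp add: card_Diff_subset)
qed

lemma equidistributed_append_iff:
  fixes us :: "(bit^'n::finite) list"
  assumes "list_independent us"
  shows "equidistributed (us @ bs) \<longleftrightarrow>
    (\<exists>V. vec.subspace V \<and> vec.dim V = length us + length bs \<and> balanced V \<and> list_span us \<subseteq> V \<and>
         set bs \<subseteq> V \<and> list_independent (us @ bs))"
proof
  assume "equidistributed (us @ bs)"
  then have ind: "list_independent (us @ bs)" and "balanced (list_span (us @ bs))"
    by (auto simp: equidistributed_iff)
  moreover have "list_span us \<subseteq> list_span (us @ bs)"
    using list_span_subset[OF subspace_list_span, of us "us @ bs"] set_subset_list_span[of "us @ bs"]
    by auto
  ultimately show "\<exists>V. vec.subspace V \<and> vec.dim V = length us + length bs \<and> balanced V \<and>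
      list_span us \<subseteq> V \<and> set bs \<subseteq> V \<and> list_independent (us @ bs)"
    using subspace_list_span dim_list_span[OF ind] set_subset_list_span[of "us @ bs"]
    by (intro exI[of _ "list_span (us @ bs)"]) auto
next
  assume "\<exists>V. vec.subspace V \<and> vec.dim V = length us + length bs \<and> balanced V \<and>
      list_span us \<subseteq> V \<and> set bs \<subseteq> V \<and> list_independent (us @ bs)"
  then obtain V where V: "vec.subspace V" "vec.dim V = length us + length bs" "balanced V"
    "list_span us \<subseteq> V" "set bs \<subseteq> V" "list_independent (us @ bs)" by blast
  then have "list_span (us @ bs) = V"
    using set_subset_list_span[of us] by (intro list_span_eq_if_length_dim) auto
  then show "equidistributed (us @ bs)" using V by (simp add: equidistributed_iff)
qed

lemma card_balanced_superspaces_mult: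
  fixes U :: "(bit^'n::finite) set"
  assumes U: "vec.subspace U" "vec.dim U = i" "balanced U" and ij: "i \<le> j"
    and dvd: "2 ^ j dvd CARD('n) + 1"
  shows "card {V. vec.subspace V \<and> vec.dim V = j \<and> balanced V \<and> U \<subseteq> V} * (\<Prod>r<j-i. 2 ^ j - 2 ^ (i + r))
       = (\<Prod>r<j-i. halving_count (CARD('n) + 1) (i + r))"
proof -
  obtain us where us: "list_independent us" "list_span us = U" "length us = i"
    using obtain_list_basis[OF U(1)] U(2) by metis
  define VV where "VV = {V. vec.subspace V \<and> vec.dim V = j \<and> balanced V \<and> U \<subseteq> V}"
  define E where "E V = {bs. length bs = j - i \<and> set bs \<subseteq> V \<and> list_independent (us @ bs)}" for V
  have span_E: "list_span (us @ bs) = V" if "V \<in> VV" "bs \<in> E V" for V bs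
    using that us ij set_subset_list_span[of us]
    by (intro list_span_eq_if_length_dim) (auto simp: VV_def E_def)
  have "{bs. length bs = j - i \<and> equidistributed (us @ bs)} = (\<Union>V\<in>VV. E V)"
    using ij by (auto simp: equidistributed_append_iff[OF us(1)] us VV_def E_def)
  then have "(\<Prod>r<j-i. halving_count (CARD('n) + 1) (i + r)) = card (\<Union>V\<in>VV. E V)"
    using card_equidistributed_extensions[of us j "j - i"] balanced_imp_equidistributed[of us] us U ij dvd
    by simp
  also have "\<dots> = (\<Sum>V\<in>VV. card (E V))"
  proof (rule card_UN_disjoint)
    show "\<forall>V\<in>VV. finite (E V)"
      using finite_lists_length_eq_finite_type[of "j - i"] by (auto simp: E_def elim: finite_subset[rotated])
    show "\<forall>V\<in>VV. \<forall>V'\<in>VV. V \<noteq> V' \<longrightarrow> E V \<inter> E V' = {}" using span_E by blast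
  qed simp
  also have "\<dots> = (\<Sum>V\<in>VV. \<Prod>r<j-i. 2 ^ j - 2 ^ (i + r))"
  proof (rule sum.cong)
    fix V assume "V \<in> VV"
    then show "card (E V) = (\<Prod>r<j-i. 2 ^ j - 2 ^ (i + r))"
      using card_independent_extensions[of V j us "j - i"] us set_subset_list_span[of us]
      by (auto simp: VV_def E_def)
  qed simp
  finally show ?thesis by (simp add: VV_def)
qed

lemma central_binomial_eq_twice: "1 \<le> h \<Longrightarrow> (2 * h) choose h = 2 * ((2 * h - 1) choose h)"
proof -
  assume "1 \<le> h"
  then obtain h' where h: "h = Suc h'" by (cases h) auto
  have "Suc (2 * h') choose h' = Suc (2 * h') choose (Suc (2 * h') - h')"
    by (rule binomial_symmetric) simp
  then have "Suc (2 * h') choose h' = Suc (2 * h') choose Suc h'" by (simp add: Suc_diff_le)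
  then show ?thesis using h by simp
qed

lemma real_halving_count:
  assumes "2 ^ Suc s dvd W" "0 < W"
  shows "real (halving_count W s) =
           real (fact (W div 2 ^ s)) ^ 2 ^ s / (real (fact (W div 2 ^ Suc s)) ^ 2 ^ Suc s * 2)"
proof -
  obtain h where W: "W = 2 ^ Suc s * h" using assms(1) by (elim dvdE)
  then have h: "1 \<le> h" "W div 2 ^ s = 2 * h" "W div 2 ^ Suc s = h" "W div 2 ^ s div 2 = h"
    using assms(2) by (auto simp: Suc_le_eq)
  have "real (2 * h choose h) = fact (2 * h) / (fact h * fact h)"
    by (simp add: binomial_fact mult_2)
  moreover have "real (2 * h - 1 choose h) = real (2 * h choose h) / 2"
    using central_binomial_eq_twice[OF h(1)] by simp
  moreover have "(x * x) ^ 2 ^ s = x ^ 2 ^ Suc s" for x :: real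
    by (simp only: power_Suc power_mult power2_eq_square)
  moreover have "(2::nat) ^ s = (2 ^ s - 1) + 1" by simp
  ultimately show ?thesis
    unfolding halving_count_def Let_def h(2,3,4)
    by (simp add: power_divide power_add[symmetric] flip: power_Suc2)
qed

lemma prod_halving_count:
  assumes "0 < W" "2 ^ (i + n) dvd W"
  shows "real (\<Prod>r<n. halving_count W (i + r)) =
           real (fact (W div 2 ^ i)) ^ 2 ^ i / (real (fact (W div 2 ^ (i + n))) ^ 2 ^ (i + n) * 2 ^ n)"
  using assms(2)
proof (induction n)
  case 0
  then show ?case by simp
next
  case (Suc n)
  have "(2::nat) ^ (i + n) dvd 2 ^ (i + Suc n)" by (rule le_imp_power_dvd) simp
  then have dvd_n: "2 ^ (i + n) dvd W" using Suc.prems by (rule dvd_trans)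
  define F where "F k = real (fact (W div 2 ^ k)) ^ 2 ^ k" for k
  have "F (i + n) \<noteq> 0" by (simp add: F_def)
  have "real (\<Prod>r<Suc n. halving_count W (i + r)) =
      real (\<Prod>r<n. halving_count W (i + r)) * real (halving_count W (i + n))" by simp
  also have "\<dots> = F i / (F (i + n) * 2 ^ n) * (F (i + n) / (F (i + Suc n) * 2))"
    using Suc.IH[OF dvd_n] real_halving_count[of "i + n" W] Suc.prems assms(1) by (simp add: F_def)
  also have "\<dots> = F i / (F (i + Suc n) * 2 ^ Suc n)"
    using \<open>F (i + n) \<noteq> 0\<close> by (simp add: field_simps)
  finally show ?case by (simp add: F_def)
qed

lemma qfact_2: "qfact 2 n = (\<Prod>s=1..n. (2::real) ^ s - 1)"
  unfolding qfact_def by (simp add: geometric_sum)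

lemma prod_pow2_diff:
  "real (\<Prod>r<n. (2::nat) ^ (i + n) - 2 ^ (i + r)) = 2 ^ (\<Sum>r<n. i + r) * qfact 2 n"
proof -
  have "real (\<Prod>r<n. (2::nat) ^ (i + n) - 2 ^ (i + r)) = (\<Prod>r<n. (2::real) ^ (i + r) * (2 ^ (n - r) - 1))"
    unfolding of_nat_prod
  proof (rule prod.cong)
    fix r assume "r \<in> {..<n}"
    then have "(2::nat) ^ (i + r) \<le> 2 ^ (i + n)" "(2::real) ^ (i + n) = 2 ^ (i + r) * 2 ^ (n - r)"
      by (simp_all add: power_add[symmetric])
    then show "real ((2::nat) ^ (i + n) - 2 ^ (i + r)) = 2 ^ (i + r) * (2 ^ (n - r) - 1)"
      by (simp add: of_nat_diff algebra_simps)
  qed simp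
  also have "\<dots> = 2 ^ (\<Sum>r<n. i + r) * (\<Prod>r<n. (2::real) ^ (n - r) - 1)"
    by (simp add: prod.distrib power_sum)
  also have "(\<Prod>r<n. (2::real) ^ (n - r) - 1) = qfact 2 n"
    unfolding qfact_2 lessThan_atLeast0
    by (subst prod.atLeastLessThan_rev_at_least_Suc_atMost) simp
  finally show ?thesis .
qed

lemma Gamma_dot_eq_quotient:
  assumes "0 < W" "2 ^ j dvd W" "i \<le> j"
  shows "Gamma_dot W i j =
           real (\<Prod>r<j-i. halving_count W (i + r)) / real (\<Prod>r<j-i. (2::nat) ^ j - 2 ^ (i + r))"
proof -
  define n where "n = j - i"
  define S where "S = (\<Sum>r<n. i + r)"
  have j: "j = i + n" using assms(3) by (simp add: n_def)
  have "(j - i) * (j + i + 1) = 2 * (n + S)"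
    unfolding S_def j by (induction n) (auto simp: algebra_simps)
  then have "real ((j - i) * (j + i + 1)) / 2 = real (n + S)" by simp
  then have "(2::real) powr (real ((j - i) * (j + i + 1)) / 2) = 2 ^ (n + S)"
    by (simp only: powr_realpow zero_less_numeral)
  moreover have "real (\<Prod>r<n. (2::nat) ^ j - 2 ^ (i + r)) = 2 ^ S * qfact 2 n"
    using prod_pow2_diff[of i n] by (simp add: j S_def)
  moreover have "real (\<Prod>r<n. halving_count W (i + r)) =
      real (fact (W div 2 ^ i)) ^ 2 ^ i / (real (fact (W div 2 ^ j)) ^ 2 ^ j * 2 ^ n)"
    using prod_halving_count[of W i n] assms(1,2) by (simp add: j)
  moreover have "0 < qfact 2 n" unfolding qfact_2 by (intro prod_pos) simp
  moreover have "0 < real (fact (W div 2 ^ j)) ^ 2 ^ j" by simp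
  ultimately show ?thesis
    unfolding Gamma_dot_def n_def[symmetric] by (simp add: field_simps power_add)
qed

lemma card_Ddot_superspaces:
  fixes U :: "(bit^'n::finite) set"
  assumes U: "vec.subspace U" "vec.dim U = i" "balanced U" and "i \<le> j"
    and ne: "Ddot j \<noteq> ({} :: (bit^'n) set set)"
  shows "real (card {V \<in> (Ddot j :: (bit^'n) set set). U \<subseteq> V}) = Gamma_dot (CARD('n) + 1) i j"
proof -
  let ?P = "\<Prod>r<j-i. (2::nat) ^ j - 2 ^ (i + r)"
  have dvd: "2 ^ j dvd CARD('n) + 1" by (rule pow2_dvd_if_Ddot_nonempty[OF ne])
  have "{V \<in> (Ddot j :: (bit^'n) set set). U \<subseteq> V} =
      {V. vec.subspace V \<and> vec.dim V = j \<and> balanced V \<and> U \<subseteq> V}"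
    using Ddot_eq_balanced[OF ne] by blast
  then have "card {V \<in> (Ddot j :: (bit^'n) set set). U \<subseteq> V} * ?P =
      (\<Prod>r<j-i. halving_count (CARD('n) + 1) (i + r))"
    using card_balanced_superspaces_mult[OF U \<open>i \<le> j\<close> dvd] by simp
  then have "real (card {V \<in> (Ddot j :: (bit^'n) set set). U \<subseteq> V}) * real ?P =
      real (\<Prod>r<j-i. halving_count (CARD('n) + 1) (i + r))"
    by (simp only: of_nat_mult[symmetric])
  moreover have "real ?P \<noteq> 0" by auto
  ultimately have "real (card {V \<in> (Ddot j :: (bit^'n) set set). U \<subseteq> V}) =
      real (\<Prod>r<j-i. halving_count (CARD('n) + 1) (i + r)) / real ?P"
    by (simp add: eq_divide_eq)
  also have "\<dots> = Gamma_dot (CARD('n) + 1) i j"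
    by (rule Gamma_dot_eq_quotient[symmetric]) (use dvd \<open>i \<le> j\<close> in simp_all)
  finally show ?thesis .
qed

theorem lemma7:
  fixes w i j :: nat
  assumes "w = CARD('n::finite) + 1"
    and "(w - 1) mod 6 = 1 \<or> (w - 1) mod 6 = 3"
    and "i \<le> j"
    and "(Ddot j :: (bit ^ 'n) set set) \<noteq> {}"
  shows "(\<forall>U \<in> (Ddot i :: (bit ^ 'n) set set).
            real (card {V \<in> (Ddot j :: (bit ^ 'n) set set). U \<subseteq> V}) = Gamma_dot w i j)
       \<and> real (card (Ddot j :: (bit ^ 'n) set set)) = Gamma_dot w 0 j"
proof
  show "\<forall>U \<in> (Ddot i :: (bit ^ 'n) set set).
      real (card {V \<in> (Ddot j :: (bit ^ 'n) set set). U \<subseteq> V}) = Gamma_dot w i j"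
    using card_Ddot_superspaces[OF _ _ _ assms(3,4)] balanced_if_Ddot assms(1) by blast
  have "balanced {0 :: bit ^ 'n}" by (simp add: balanced_def)
  moreover have "{V \<in> (Ddot j :: (bit ^ 'n) set set). {0} \<subseteq> V} = Ddot j"
    using balanced_if_Ddot vec.subspace_0 by blast
  ultimately show "real (card (Ddot j :: (bit ^ 'n) set set)) = Gamma_dot w 0 j"
    using card_Ddot_superspaces[of "{0 :: bit ^ 'n}" 0 j] vec.subspace_single_0 assms(1,4) by simp
qed

end
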